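(* Let $S_A>0$, $c_{\mathrm{TX}}>0$, $\phi>0$, $\theta=\phi/c_{\mathrm{TX}}$, $B=1$, $0<\lambda<\lambda_{\mathrm{th}}=\left(\sqrt{1+1/S_A}+\sqrt{\theta}\right)^{-2}$, $v_{\mathrm{th}}(\lambda,0)=\sqrt{\lambda\theta}+\frac{\lambda}{2}+\sqrt{\lambda}\sqrt{\sqrt{\lambda\theta}+\frac{\lambda}{4}+\frac{1}{S_A}}$. For $V_k\in(0,1]$, $\zeta\geq0$, $S_M\geq0$ let $$f(\zeta,S_M,V_k)=\zeta e^{-\zeta}\frac{V_k}{1+V_k\frac{S_AS_M}{S_A+S_M}}+(1-\zeta e^{-\zeta})V_k+\lambda\zeta(1+\theta S_M),$$ and let the myopic policy $(\zeta^{(MP)}(V_k),S_M^{(MP)}(V_k))$ be a minimizer of $f(\cdot,\cdot,V_k)$ over $\zeta\geq0,S_M\geq0$ (with $S_M=0$ when $\zeta=0$). Then: (i) if $V_k\leq v_{\mathrm{th}}(\lambda,0)$, then $(\zeta^{(MP)}(V_k),S_M^{(MP)}(V_k))=(0,0)$; (ii) otherwise, $$S_M^{(MP)}(V_k)=\left(\frac{e^{-\zeta^{(MP)}(V_k)/2}}{\sqrt{\lambda\theta}}-\frac{1}{V_k}\right)\frac{V_kS_A}{1+V_kS_A},$$ and $\zeta^{(MP)}(V_k)$ is the unique $\zeta\in\left(0,\min\left\{1,2\ln\left(\frac{V_k}{\sqrt{\lambda\theta}}\right)\right\}\right)$ solving $$\frac{-V_kS_A}{1+V_kS_A}\left(V_k-e^{\zeta/2}\sqrt{\lambda\theta}\frac{2-\zeta}{1-\zeta}+\frac{e^{\zeta}}{1-\zeta}\frac{\lambda\theta}{V_k}\right)+\frac{\lambda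 e^{\zeta}}{1-\zeta}=0.$$
   Context: Decentralized sensing scheme with a single channel, in the large-network limit: $V_k$ is the fusion center's prior variance; $\zeta$ is the normalized activation probability; a transmission succeeds with probability $\zeta e^{-\zeta}$, in which case the posterior variance is $V_k/(1+V_k\frac{S_AS_M}{S_A+S_M})$ ($S_A$ ambient SNR, $S_M$ local measurement SNR), otherwise it is $V_k$; $\lambda$ is a Lagrange multiplier weighting the sensing-transmission cost. *)

theory Defs
  imports Complex_Main
begin

text \<open>Myopic cost: prior variance V, activation zeta, local SNR sM, ambient SNR sA,
  Lagrange multiplier lam, theta = phi / c_TX.\<close>
definition myopic_cost :: "real \<Rightarrow> real \<Rightarrow> real \<Rightarrow> real \<Rightarrow> real \<Rightarrow> real \<Rightarrow> real" where
  "myopic_cost sA theta lam zeta sM V =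
     zeta * exp (- zeta) * (V / (1 + V * (sA * sM / (sA + sM))))
     + (1 - zeta * exp (- zeta)) * V + lam * zeta * (1 + theta * sM)"

definition lambda_th :: "real \<Rightarrow> real \<Rightarrow> real" where
  "lambda_th sA theta = 1 / (sqrt (1 + 1 / sA) + sqrt theta)\<^sup>2"

definition v_th :: "real \<Rightarrow> real \<Rightarrow> real \<Rightarrow> real" where
  "v_th sA theta lam = sqrt (lam * theta) + lam / 2
     + sqrt lam * sqrt (sqrt (lam * theta) + lam / 4 + 1 / sA)"

definition zeta_eq :: "real \<Rightarrow> real \<Rightarrow> real \<Rightarrow> real \<Rightarrow> real \<Rightarrow> bool" where
  "zeta_eq sA theta lam V z \<longleftrightarrow>
     (- V * sA / (1 + V * sA)) *
       (V - exp (z / 2) * sqrt (lam * theta) * ((2 - z) / (1 - z))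
          + exp z / (1 - z) * (lam * theta / V))
     + lam * exp z / (1 - z) = 0"

end

theory Submission
  imports Defs
begin

text \<open>Writing G(t) for the variance reduction of a successful transmission at local SNR t,
  the cost is V - zeta exp(-zeta) G(t) + lam zeta (1 + theta t). Since exp(-zeta) < 1 for
  zeta > 0, activating pays off iff G(t) > lam (1 + theta t) for some t \<ge> 0; after clearing the
  denominator of G this is a quadratic inequality in t, solvable iff
  V > sqrt(lam theta) + sqrt(lam (V + 1/sA)), which is exactly V > v_th. Above the threshold the
  minimizer is interior, and with y = sqrt(lam theta) exp(zeta/2) / V its two first-order
  conditions give sM in closed form and turn the equation for zeta into
  c (1 - y) (1 - y - zeta) = (V / theta) y^2. While y < 1 the left side decreases and the right
  side increases in zeta, so the root is unique.\<close>

lemma quadratic_nonneg_on_nonneg_iff: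
  fixes X Y Z B :: real
  assumes X: "X > 0" and Z: "Z > 0" and XYZ: "X * Y = Z^2"
  shows "(\<forall>t\<ge>0. 0 \<le> X * t^2 + B * t + Y) \<longleftrightarrow> - 2 * Z \<le> B"
proof
  assume nonneg: "\<forall>t\<ge>0. 0 \<le> X * t^2 + B * t + Y"
  have "Z / X \<ge> 0" using X Z by simp
  then have "0 \<le> X * (Z/X)^2 + B * (Z/X) + Y" using nonneg by blast
  then have "0 \<le> X * (X * (Z/X)^2 + B * (Z/X) + Y)" using X by (intro mult_nonneg_nonneg) auto
  also have "\<dots> = (2 * Z + B) * Z"
    using X XYZ by (simp add: field_simps power2_eq_square)
  finally show "- 2 * Z \<le> B" using Z by (simp add: zero_le_mult_iff)
next
  assume B: "- 2 * Z \<le> B"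
  show "\<forall>t\<ge>0. 0 \<le> X * t^2 + B * t + Y"
  proof (intro allI impI)
    fix t :: real assume t: "t \<ge> 0"
    have "X * (X * t^2 - 2 * Z * t + Y) = (X * t - Z)^2"
      using XYZ by (simp add: power2_eq_square algebra_simps)
    then have "0 \<le> X * (X * t^2 - 2 * Z * t + Y)" by simp
    then have "0 \<le> X * t^2 - 2 * Z * t + Y" using X by (simp add: zero_le_mult_iff)
    also have "\<dots> \<le> X * t^2 + B * t + Y" using mult_right_mono[OF B t] by simp
    finally show "0 \<le> X * t^2 + B * t + Y" .
  qed
qed

lemma DERIV_zero_at_min_on_nonneg:
  fixes f :: "real \<Rightarrow> real"
  assumes "(f has_real_derivative D) (at x)" "x > 0" "\<forall>y\<ge>0. f x \<le> f y"
  shows "D = 0"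
proof (rule DERIV_local_min[OF assms(1,2)], intro allI impI)
  fix y assume "\<bar>x - y\<bar> < x"
  then show "f x \<le> f y" using assms(3) by simp
qed

definition variance_reduction :: "real \<Rightarrow> real \<Rightarrow> real \<Rightarrow> real" where
  "variance_reduction sA V t = V^2 * sA * t / (sA + (1 + V * sA) * t)"

lemma variance_reduction_zero [simp]: "variance_reduction sA V 0 = 0"
  by (simp add: variance_reduction_def)

lemma variance_reduction_deriv:
  assumes "sA > 0" "V > 0" "t \<ge> 0"
  shows "(variance_reduction sA V has_real_derivative
    V^2 * sA^2 / (sA + (1 + V * sA) * t)^2) (at t)"
proof -
  have "sA + (1 + V * sA) * t > 0" using assms by (simp add: add_pos_nonneg)
  then show ?thesis unfolding variance_reduction_def [abs_def]
    by (auto intro!: derivative_eq_intros simp: field_simps power2_eq_square)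
qed

lemma myopic_cost_eq:
  assumes "sA > 0" "V > 0" "t \<ge> 0"
  shows "myopic_cost sA theta lam z t V
    = V - z * exp (- z) * variance_reduction sA V t + lam * z * (1 + theta * t)"
proof -
  have "sA + t > 0" "sA + (1 + V * sA) * t > 0"
    using assms by (auto intro: add_pos_nonneg)
  then have "V / (1 + V * (sA * t / (sA + t))) = V - variance_reduction sA V t"
    unfolding variance_reduction_def by (simp add: field_simps power2_eq_square)
  then show ?thesis unfolding myopic_cost_def by (simp only:) (simp add: algebra_simps)
qed

lemma myopic_cost_inactive [simp]: "myopic_cost sA theta lam 0 t V = V"
  by (simp add: myopic_cost_def)

lemma variance_reduction_le_cost_iff:
  assumes s: "sA > 0" and th: "theta > 0" and l: "lam > 0" and V: "V > 0"
  shows "(\<forall>t\<ge>0. variance_reduction sA V t \<le> lam * (1 + theta * t))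
    \<longleftrightarrow> V \<le> sqrt (lam * theta) + sqrt (lam * (V + 1 / sA))"
proof -
  define k where "k = sqrt (lam * theta)"
  define r where "r = sqrt (lam * (V + 1 / sA))"
  define a where "a = 1 + V * sA"
  have k: "k > 0" "k^2 = lam * theta" unfolding k_def using l th by auto
  have "V + 1 / sA > 0" using s V by (simp add: add_pos_pos)
  then have r: "r > 0" "r^2 = lam * (V + 1 / sA)" unfolding r_def using l by auto
  have a: "a > 0" unfolding a_def using s V by (simp add: add_pos_pos)
  have r_a: "sA * r^2 = lam * a" unfolding r a_def using s by (simp add: field_simps)
  have "(\<forall>t\<ge>0. variance_reduction sA V t \<le> lam * (1 + theta * t))
    \<longleftrightarrow> (\<forall>t\<ge>0. 0 \<le> (lam * theta * a) * t^2 + (sA * (k^2 + r^2) - sA * V^2) * t + lam * sA)"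
  proof (intro all_cong imp_cong refl)
    fix t :: real assume "t \<ge> 0"
    then have "sA + a * t > 0" using s a by (simp add: add_pos_nonneg)
    moreover note r_a
    ultimately show "variance_reduction sA V t \<le> lam * (1 + theta * t) \<longleftrightarrow>
        0 \<le> (lam * theta * a) * t^2 + (sA * (k^2 + r^2) - sA * V^2) * t + lam * sA"
      unfolding variance_reduction_def a_def[symmetric] k(2)
      by (simp add: divide_le_eq algebra_simps power2_eq_square)
  qed
  also have "\<dots> \<longleftrightarrow> - 2 * (sA * k * r) \<le> sA * (k^2 + r^2) - sA * V^2"
  proof (rule quadratic_nonneg_on_nonneg_iff)
    show "lam * theta * a > 0" "sA * k * r > 0" using l th a s k r by simp_all
    have "(sA * k * r)^2 = sA * k^2 * (sA * r^2)" by (simp add: power_mult_distrib power2_eq_square)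
    then show "lam * theta * a * (lam * sA) = (sA * k * r)^2" unfolding k(2) r_a by simp
  qed
  also have "\<dots> \<longleftrightarrow> 0 \<le> sA * ((k + r)^2 - V^2)"
    by (simp add: power2_eq_square algebra_simps)
  also have "\<dots> \<longleftrightarrow> V^2 \<le> (k + r)^2"
    using s by (simp add: zero_le_mult_iff)
  also have "\<dots> \<longleftrightarrow> V \<le> k + r"
    using V k r by (simp add: abs_le_square_iff[symmetric])
  finally show ?thesis unfolding k_def r_def .
qed

text \<open>With k = sqrt(lam theta), the number v_th - k is the positive root of
  x^2 = lam (x + k + 1/sA), i.e. of (V - k)^2 = lam (V + 1/sA) read as an equation in V - k.\<close>

lemma le_v_th_iff:
  assumes s: "sA > 0" and th: "theta > 0" and l: "lam > 0" and V: "V > 0"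
  shows "V \<le> v_th sA theta lam \<longleftrightarrow> V \<le> sqrt (lam * theta) + sqrt (lam * (V + 1 / sA))"
proof -
  define k where "k = sqrt (lam * theta)"
  define r where "r = sqrt (lam * (V + 1 / sA))"
  define m where "m = sqrt (lam * k + lam^2 / 4 + lam / sA)"
  have k: "k \<ge> 0" unfolding k_def using l th by simp
  have "V + 1 / sA > 0" using s V by (simp add: add_pos_pos)
  then have r: "r \<ge> 0" "r^2 = lam * (V + 1 / sA)" unfolding r_def using l by auto
  have m: "m \<ge> 0" "m^2 = lam * k + lam^2 / 4 + lam / sA"
    unfolding m_def using l k s by auto
  have "(lam / 2)^2 \<le> m^2" unfolding m(2) using l k s by (simp add: power_divide)
  then have m_ge: "lam / 2 \<le> m" using m(1) by (rule power2_le_imp_le)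
  have "v_th sA theta lam = k + lam / 2 + m"
    unfolding v_th_def k_def[symmetric] m_def
    by (simp add: real_sqrt_mult[symmetric] algebra_simps power2_eq_square)
  moreover have "V - k \<le> lam / 2 + m \<longleftrightarrow> V - k \<le> r"
  proof (cases "V - k \<le> 0")
    case True
    then show ?thesis using r(1) m(1) l by linarith
  next
    case False
    have "V - k \<le> r \<longleftrightarrow> (V - k)^2 \<le> r^2"
      using False r(1) by (simp add: abs_le_square_iff[symmetric])
    also have "\<dots> \<longleftrightarrow> (V - k - lam / 2)^2 \<le> m^2"
      unfolding r(2) m(2) by (simp add: algebra_simps power2_eq_square)
    also have "\<dots> \<longleftrightarrow> \<bar>V - k - lam / 2\<bar> \<le> m"
      using m(1) by (simp add: abs_le_square_iff[symmetric])
    also have "\<dots> \<longleftrightarrow> V - k \<le> lam / 2 + m"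
      using False m_ge by linarith
    finally show ?thesis ..
  qed
  ultimately show ?thesis unfolding k_def r_def by linarith
qed

definition is_myopic_minimizer :: "real \<Rightarrow> real \<Rightarrow> real \<Rightarrow> real \<Rightarrow> real \<Rightarrow> real \<Rightarrow> bool" where
  "is_myopic_minimizer sA theta lam V zeta sM \<longleftrightarrow> zeta \<ge> 0 \<and> sM \<ge> 0 \<and>
     (\<forall>z\<ge>0. \<forall>t\<ge>0. myopic_cost sA theta lam zeta sM V \<le> myopic_cost sA theta lam z t V)"

lemma myopic_minimizer_inactive:
  assumes s: "sA > 0" and th: "theta \<ge> 0" and l: "lam > 0" and V: "V > 0"
    and min: "is_myopic_minimizer sA theta lam V zeta sM"
    and unprofitable: "\<forall>t\<ge>0. variance_reduction sA V t \<le> lam * (1 + theta * t)"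
  shows "zeta = 0"
proof (rule ccontr)
  assume "zeta \<noteq> 0"
  with min have zeta: "zeta > 0" and sM: "sM \<ge> 0" by (auto simp: is_myopic_minimizer_def)
  define B where "B = lam * (1 + theta * sM)"
  have B: "B > 0" unfolding B_def using l th sM by (simp add: add_pos_nonneg)
  have "exp (- zeta) * variance_reduction sA V sM \<le> exp (- zeta) * B"
    using unprofitable sM unfolding B_def by simp
  also have "\<dots> < B" using zeta B by simp
  finally have "zeta * (exp (- zeta) * variance_reduction sA V sM) < zeta * B"
    using zeta by (simp add: mult_strict_left_mono)
  then have "V < myopic_cost sA theta lam zeta sM V"
    unfolding myopic_cost_eq[OF s V sM] B_def by (simp add: algebra_simps)
  moreover have "myopic_cost sA theta lam zeta sM V \<le> V"
    using min myopic_cost_inactive[of sA theta lam 0 V] unfolding is_myopic_minimizer_def by force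
  ultimately show False by simp
qed

lemma myopic_minimizer_active:
  assumes s: "sA > 0" and th: "theta \<ge> 0" and l: "lam > 0" and V: "V > 0"
    and min: "is_myopic_minimizer sA theta lam V zeta sM"
    and t0: "t0 \<ge> 0" and profitable: "variance_reduction sA V t0 > lam * (1 + theta * t0)"
  shows "zeta > 0" "sM > 0"
proof -
  define P where "P = variance_reduction sA V t0"
  define B where "B = lam * (1 + theta * t0)"
  have B: "B > 0" unfolding B_def using l th t0 by (simp add: add_pos_nonneg)
  have PB: "B < P" using profitable unfolding P_def B_def .
  define z0 where "z0 = ln (2 * P / (P + B))"
  have z0: "z0 > 0" unfolding z0_def using B PB by simp
  have "exp (- z0) * P = (P + B) / 2"
    unfolding z0_def using B PB by (simp add: exp_minus field_simps)
  then have "z0 * B < z0 * (exp (- z0) * P)"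
    using z0 PB by (simp add: mult_strict_left_mono)
  then have "myopic_cost sA theta lam z0 t0 V < V"
    unfolding myopic_cost_eq[OF s V t0] P_def B_def by (simp add: algebra_simps)
  then have below: "myopic_cost sA theta lam zeta sM V < V"
    using min z0 t0 unfolding is_myopic_minimizer_def by (meson less_imp_le order.strict_trans1)
  then have "zeta \<noteq> 0" by auto
  then show "zeta > 0" using min unfolding is_myopic_minimizer_def by simp
  have "sM \<noteq> 0"
  proof
    assume "sM = 0"
    then have "myopic_cost sA theta lam zeta sM V = V + lam * zeta"
      using myopic_cost_eq[OF s V, of 0] by simp
    then show False using below mult_pos_pos[OF l \<open>zeta > 0\<close>] by simp
  qed
  then show "sM > 0" using min unfolding is_myopic_minimizer_def by simp
qed

lemma myopic_minimizer_stationary: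
  assumes s: "sA > 0" and V: "V > 0" and min: "is_myopic_minimizer sA theta lam V zeta sM"
    and zeta: "zeta > 0" and sM: "sM > 0"
  shows "exp (- zeta) * (V^2 * sA^2 / (sA + (1 + V * sA) * sM)^2) = lam * theta"
    and "(1 - zeta) * exp (- zeta) * variance_reduction sA V sM = lam * (1 + theta * sM)"
proof -
  define C where "C z t = V - z * exp (- z) * variance_reduction sA V t + lam * z * (1 + theta * t)"
    for z t
  have C_min: "C zeta sM \<le> C z t" if "z \<ge> 0" "t \<ge> 0" for z t
    using min that sM unfolding is_myopic_minimizer_def C_def
    by (simp add: myopic_cost_eq[OF s V])
  have "((\<lambda>t. C zeta t) has_real_derivative
      - zeta * exp (- zeta) * (V^2 * sA^2 / (sA + (1 + V * sA) * sM)^2) + lam * zeta * theta) (at sM)"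
    unfolding C_def using s V sM
    by (auto intro!: derivative_eq_intros variance_reduction_deriv)
  then have "- zeta * exp (- zeta) * (V^2 * sA^2 / (sA + (1 + V * sA) * sM)^2) + lam * zeta * theta = 0"
    by (rule DERIV_zero_at_min_on_nonneg) (use sM C_min zeta in auto)
  then have "zeta * (exp (- zeta) * (V^2 * sA^2 / (sA + (1 + V * sA) * sM)^2))
      = zeta * (lam * theta)"
    by (simp only: mult.assoc mult.left_commute[of zeta] mult_minus_left)
  then show "exp (- zeta) * (V^2 * sA^2 / (sA + (1 + V * sA) * sM)^2) = lam * theta"
    using zeta by (simp only: mult_left_cancel less_irrefl)
  have "((\<lambda>z. C z sM) has_real_derivative
      - (1 - zeta) * exp (- zeta) * variance_reduction sA V sM + lam * (1 + theta * sM)) (at zeta)"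
    unfolding C_def by (auto intro!: derivative_eq_intros simp: algebra_simps)
  then have "- (1 - zeta) * exp (- zeta) * variance_reduction sA V sM + lam * (1 + theta * sM) = 0"
    by (rule DERIV_zero_at_min_on_nonneg) (use zeta C_min sM in auto)
  then show "(1 - zeta) * exp (- zeta) * variance_reduction sA V sM = lam * (1 + theta * sM)"
    by linarith
qed

definition stationary_ratio :: "real \<Rightarrow> real \<Rightarrow> real \<Rightarrow> real \<Rightarrow> real" where
  "stationary_ratio theta lam V z = sqrt (lam * theta) * exp (z / 2) / V"

lemma stationary_ratio_pos:
  "lam * theta > 0 \<Longrightarrow> V > 0 \<Longrightarrow> stationary_ratio theta lam V z > 0"
  by (simp add: stationary_ratio_def)

lemma stationary_ratio_strict_mono:
  "lam * theta > 0 \<Longrightarrow> V > 0 \<Longrightarrow> z1 < z2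
    \<Longrightarrow> stationary_ratio theta lam V z1 < stationary_ratio theta lam V z2"
  by (simp add: stationary_ratio_def divide_strict_right_mono)

lemma stationary_ratio_less_one_iff:
  assumes "lam * theta > 0" "V > 0"
  shows "stationary_ratio theta lam V z < 1 \<longleftrightarrow> z < 2 * ln (V / sqrt (lam * theta))"
proof -
  have "stationary_ratio theta lam V z < 1 \<longleftrightarrow> exp (z / 2) < exp (ln (V / sqrt (lam * theta)))"
    using assms by (simp add: stationary_ratio_def field_simps)
  also have "\<dots> \<longleftrightarrow> z < 2 * ln (V / sqrt (lam * theta))" by (simp add: mult.commute)
  finally show ?thesis .
qed

lemma zeta_eq_iff:
  assumes s: "sA > 0" and V: "V > 0" and lt: "lam * theta > 0" and z: "z \<noteq> 1"
  defines "y \<equiv> stationary_ratio theta lam V z"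
  shows "zeta_eq sA theta lam V z \<longleftrightarrow> V * sA / (1 + V * sA) * (1 - y) * (1 - y - z) = V / theta * y^2"
proof -
  define k where "k = sqrt (lam * theta)"
  define e where "e = exp (z / 2)"
  define c where "c = V * sA / (1 + V * sA)"
  have k: "lam * theta = k^2" "k \<ge> 0" unfolding k_def using lt by simp_all
  have y: "y = k * e / V" unfolding y_def stationary_ratio_def k_def e_def ..
  have "exp z = e^2" unfolding e_def by (simp flip: exp_add add: power2_eq_square)
  then have "zeta_eq sA theta lam V z \<longleftrightarrow>
      - c * (V - e * k * ((2 - z) / (1 - z)) + e^2 / (1 - z) * (k^2 / V)) + lam * e^2 / (1 - z) = 0"
    unfolding zeta_eq_def k_def[symmetric] e_def[symmetric] c_def k(1) using k(2) by simp
  also have "- c * (V - e * k * ((2 - z) / (1 - z)) + e^2 / (1 - z) * (k^2 / V)) + lam * e^2 / (1 - z)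
      = - (V / (1 - z)) * (c * (1 - y) * (1 - y - z) - V / theta * y^2)"
  proof -
    have "theta \<noteq> 0" using lt by auto
    then have y2: "V / theta * y^2 = lam * e^2 / V"
      unfolding y using V k(1) by (simp add: field_simps power2_eq_square)
    define d where "d = 1 - z"
    have d: "d \<noteq> 0" "z = 1 - d" unfolding d_def using z by simp_all
    show ?thesis unfolding y2 unfolding y d(2) using V d(1)
      by (simp add: field_simps) (simp add: algebra_simps power2_eq_square)
  qed
  also have "\<dots> = 0 \<longleftrightarrow> c * (1 - y) * (1 - y - z) = V / theta * y^2"
    using V z by simp
  finally show ?thesis unfolding c_def .
qed

lemma exp_neg_eq_stationary_ratio:
  assumes "lam * theta > 0" "V > 0"
  shows "exp (- z) = lam * theta / (V * stationary_ratio theta lam V z)^2"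
proof -
  have "(V * stationary_ratio theta lam V z)^2 = lam * theta * exp z"
    unfolding stationary_ratio_def using assms
    by (simp add: power_mult_distrib power_divide flip: exp_of_nat_mult)
  moreover have "lam \<noteq> 0" "theta \<noteq> 0" using assms(1) by auto
  ultimately show ?thesis using assms stationary_ratio_pos[OF assms]
    by (simp add: exp_minus field_simps)
qed

lemma stationary_snr_eq:
  assumes s: "sA > 0" and th: "theta > 0" and l: "lam > 0" and V: "V > 0" and sM: "sM \<ge> 0"
    and foc_snr: "exp (- zeta) * (V^2 * sA^2 / (sA + (1 + V * sA) * sM)^2) = lam * theta"
  shows "sA + (1 + V * sA) * sM = sA / stationary_ratio theta lam V zeta"
proof -
  define y where "y = stationary_ratio theta lam V zeta"
  define u where "u = sA + (1 + V * sA) * sM"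
  have lt: "lam * theta > 0" using l th by simp
  have y: "y > 0" unfolding y_def using lt V by (rule stationary_ratio_pos)
  have u: "u > 0" unfolding u_def using s V sM by (simp add: add_pos_nonneg)
  have "(y * u)^2 = sA^2"
    using foc_snr unfolding exp_neg_eq_stationary_ratio[OF lt V] y_def[symmetric] u_def[symmetric]
    using th l V y u by (simp add: field_simps power_mult_distrib)
  then have "y * u = sA" using power2_eq_imp_eq y u s by (metis less_eq_real_def mult_pos_pos)
  then show ?thesis unfolding u_def y_def[symmetric] using y by (simp add: field_simps)
qed

lemma stationary_activation_balance:
  assumes s: "sA > 0" and th: "theta > 0" and l: "lam > 0" and V: "V > 0"
    and snr: "sA + (1 + V * sA) * sM = sA / y" and y: "y = stationary_ratio theta lam V zeta"
    and foc_activation: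
      "(1 - zeta) * exp (- zeta) * variance_reduction sA V sM = lam * (1 + theta * sM)"
  shows "(1 - zeta) * theta * sM = y * (1 + theta * sM)"
proof -
  have lt: "lam * theta > 0" using l th by simp
  have y_pos: "y > 0" unfolding y using lt V by (rule stationary_ratio_pos)
  have "variance_reduction sA V sM = V^2 * y * sM"
    unfolding variance_reduction_def snr using y_pos s by (simp add: field_simps)
  then have "lam * ((1 - zeta) * theta * sM)
      = y * ((1 - zeta) * exp (- zeta) * variance_reduction sA V sM)"
    unfolding exp_neg_eq_stationary_ratio[OF lt V] y[symmetric] using V y_pos
    by (simp add: field_simps power2_eq_square)
  also have "\<dots> = lam * (y * (1 + theta * sM))"
    unfolding foc_activation by simp
  finally show ?thesis using l by simp
qed

lemma myopic_stationary_point: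
  assumes s: "sA > 0" and th: "theta > 0" and l: "lam > 0" and V: "V > 0" and sM: "sM > 0"
    and foc_snr: "exp (- zeta) * (V^2 * sA^2 / (sA + (1 + V * sA) * sM)^2) = lam * theta"
    and foc_activation:
      "(1 - zeta) * exp (- zeta) * variance_reduction sA V sM = lam * (1 + theta * sM)"
  shows "sM = (exp (- zeta / 2) / sqrt (lam * theta) - 1 / V) * (V * sA / (1 + V * sA))"
    and "zeta < 1" and "zeta < 2 * ln (V / sqrt (lam * theta))"
    and "zeta_eq sA theta lam V zeta"
proof -
  define y where "y = stationary_ratio theta lam V zeta"
  define a where "a = 1 + V * sA"
  have lt: "lam * theta > 0" using l th by simp
  have y: "y > 0" unfolding y_def using lt V by (rule stationary_ratio_pos)
  have a: "a > 0" unfolding a_def using s V by (simp add: add_pos_pos)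
  have snr: "sA + a * sM = sA / y"
    unfolding a_def y_def using stationary_snr_eq[OF s th l V _ foc_snr] sM by simp
  then have sM_y: "sM = sA * (1 - y) / (a * y)" using a y by (simp add: field_simps)
  have "sA < sA / y" unfolding snr[symmetric] using a sM by simp
  then have "y < 1" using s y by (simp add: field_simps)
  then show "zeta < 2 * ln (V / sqrt (lam * theta))"
    unfolding y_def using lt V by (simp add: stationary_ratio_less_one_iff)
  have "exp (- zeta / 2) / sqrt (lam * theta) = 1 / (V * y)"
    unfolding y_def stationary_ratio_def using V lt by (simp add: exp_minus field_simps flip: exp_add)
  then show "sM = (exp (- zeta / 2) / sqrt (lam * theta) - 1 / V) * (V * sA / (1 + V * sA))"
    unfolding sM_y a_def[symmetric] using V y a by (simp add: field_simps)
  have balance: "(1 - zeta) * theta * sM = y * (1 + theta * sM)"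
    using stationary_activation_balance[OF s th l V snr[unfolded a_def] y_def foc_activation] .
  moreover have "y * (1 + theta * sM) > 0" using y th sM by (simp add: add_pos_pos)
  ultimately have "0 < (1 - zeta) * (theta * sM)" by (simp add: mult.assoc)
  then show "zeta < 1" using mult_pos_pos[OF th sM] by (simp add: zero_less_mult_iff)
  have core: "theta * sA * (1 - y) * (1 - y - zeta) = a * y^2"
    using balance unfolding sM_y using a y
    by (simp add: field_simps) (simp add: algebra_simps power2_eq_square)
  have "V * sA / a * (1 - y) * (1 - y - zeta)
      = V / (a * theta) * (theta * sA * (1 - y) * (1 - y - zeta))"
    using a th by (simp add: field_simps)
  also have "\<dots> = V / theta * y^2" unfolding core using a by simp
  finally show "zeta_eq sA theta lam V zeta"
    using zeta_eq_iff[OF s V lt, of zeta] \<open>zeta < 1\<close> unfolding y_def a_def by simp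
qed

lemma zeta_eq_unique:
  assumes s: "sA > 0" and th: "theta > 0" and l: "lam > 0" and V: "V > 0"
  defines "zmax \<equiv> min 1 (2 * ln (V / sqrt (lam * theta)))"
  assumes z1: "0 < z1" "z1 < zmax" "zeta_eq sA theta lam V z1"
    and z2: "0 < z2" "z2 < zmax" "zeta_eq sA theta lam V z2"
  shows "z1 = z2"
proof -
  define y where "y = stationary_ratio theta lam V"
  have lt: "lam * theta > 0" using l th by simp
  define c where "c = V * sA / (1 + V * sA)"
  have c: "c > 0" unfolding c_def using s V by (simp add: add_pos_pos)
  have q: "V / theta > 0" using th V by simp
  have root: "0 < y z \<and> y z < 1 \<and> c * (1 - y z) * (1 - y z - z) = V / theta * (y z)^2"
    if "0 < z" "z < zmax" "zeta_eq sA theta lam V z" for z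
    using that zeta_eq_iff[OF s V lt, of z] stationary_ratio_pos[OF lt V]
      stationary_ratio_less_one_iff[OF lt V]
    unfolding y_def c_def zmax_def by auto
  have no_larger_root: False if "z < z'"
    and "0 < z" "z < zmax" "zeta_eq sA theta lam V z"
    and "0 < z'" "z' < zmax" "zeta_eq sA theta lam V z'" for z z'
  proof -
    from root[OF that(2-4)] root[OF that(5-7)]
    have y: "0 < y z" "y z < 1" "0 < y z'" "y z' < 1"
      and eq: "c * (1 - y z) * (1 - y z - z) = V / theta * (y z)^2"
        "c * (1 - y z') * (1 - y z' - z') = V / theta * (y z')^2" by auto
    have yy: "y z < y z'" unfolding y_def using stationary_ratio_strict_mono[OF lt V that(1)] .
    have "0 < c * (1 - y z') * (1 - y z' - z')" unfolding eq using q y by (intro mult_pos_pos) simp_all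
    moreover have "0 < c * (1 - y z')" using c y by simp
    ultimately have "0 < 1 - y z' - z'" by (simp add: zero_less_mult_iff)
    then have "(1 - y z') * (1 - y z' - z') < (1 - y z) * (1 - y z - z)"
      using yy y that(1) by (intro mult_strict_mono) auto
    then have "c * (1 - y z') * (1 - y z' - z') < c * (1 - y z) * (1 - y z - z)"
      using c by (simp add: mult.assoc)
    moreover have "V / theta * (y z)^2 < V / theta * (y z')^2"
      using q y yy by (intro mult_strict_left_mono power_strict_mono) simp_all
    ultimately show False using eq by linarith
  qed
  show ?thesis
    using no_larger_root[OF _ z1 z2] no_larger_root[OF _ z2 z1] by (meson linorder_cases)
qed

theorem corollary2:
  fixes sA cTX phi theta lam V zeta sM :: real
  assumes sA_pos: "sA > 0" and c_pos: "cTX > 0" and phi_pos: "phi > 0"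
    and theta_def: "theta = phi / cTX"
    and lam_pos: "0 < lam" and lam_lt: "lam < lambda_th sA theta"
    and V_range: "0 < V" "V \<le> 1"
    and zeta_nonneg: "zeta \<ge> 0" and sM_nonneg: "sM \<ge> 0"
    and zero_conv: "zeta = 0 \<longrightarrow> sM = 0"
    and minimizer: "\<forall>z \<ge> 0. \<forall>t \<ge> 0.
        myopic_cost sA theta lam zeta sM V \<le> myopic_cost sA theta lam z t V"
  shows "(V \<le> v_th sA theta lam \<longrightarrow> zeta = 0 \<and> sM = 0)
       \<and> (V > v_th sA theta lam \<longrightarrow>
            sM = (exp (- zeta / 2) / sqrt (lam * theta) - 1 / V) * (V * sA / (1 + V * sA))
          \<and> 0 < zeta \<and> zeta < min 1 (2 * ln (V / sqrt (lam * theta)))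
          \<and> zeta_eq sA theta lam V zeta
          \<and> (\<forall>z. 0 < z \<and> z < min 1 (2 * ln (V / sqrt (lam * theta)))
                  \<and> zeta_eq sA theta lam V z \<longrightarrow> z = zeta))"
proof -
  \<comment> \<open>lam < lambda_th and V \<le> 1 only guarantee that both regimes occur (v_th < 1); the
    characterization itself does not need them.\<close>
  have th: "theta > 0" unfolding theta_def using c_pos phi_pos by simp
  have V: "V > 0" using V_range by simp
  have min: "is_myopic_minimizer sA theta lam V zeta sM"
    unfolding is_myopic_minimizer_def using zeta_nonneg sM_nonneg minimizer by simp
  have threshold: "V \<le> v_th sA theta lam \<longleftrightarrow>
      (\<forall>t\<ge>0. variance_reduction sA V t \<le> lam * (1 + theta * t))"
    using le_v_th_iff[OF sA_pos th lam_pos V] variance_reduction_le_cost_iff[OF sA_pos th lam_pos V]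
    by simp
  show ?thesis
  proof (intro conjI impI)
    assume "V \<le> v_th sA theta lam"
    then show "zeta = 0" using myopic_minimizer_inactive[OF sA_pos _ lam_pos V min] th threshold by simp
    then show "sM = 0" using zero_conv by simp
  next
    assume "V > v_th sA theta lam"
    then obtain t0 where "t0 \<ge> 0" "variance_reduction sA V t0 > lam * (1 + theta * t0)"
      using threshold by (auto simp: not_le)
    then have active: "zeta > 0" "sM > 0"
      using myopic_minimizer_active[OF sA_pos _ lam_pos V min] th by auto
    note stationary = myopic_stationary_point[OF sA_pos th lam_pos V active(2)
        myopic_minimizer_stationary[OF sA_pos V min active]]
    then show "sM = (exp (- zeta / 2) / sqrt (lam * theta) - 1 / V) * (V * sA / (1 + V * sA))"
      "0 < zeta" "zeta < min 1 (2 * ln (V / sqrt (lam * theta)))" "zeta_eq sA theta lam V zeta"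
      using active by simp_all
    show "\<forall>z. 0 < z \<and> z < min 1 (2 * ln (V / sqrt (lam * theta)))
        \<and> zeta_eq sA theta lam V z \<longrightarrow> z = zeta"
      using zeta_eq_unique[OF sA_pos th lam_pos V] active stationary by auto
  qed
qed

end
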